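(* Let $F$ be a field of characteristic zero, $k$ a positive integer, and $E$ the infinite-dimensional Grassmann algebra over $F$ graded by $\deg(\cdot)_{k^*}$. Let \[R=\begin{pmatrix} E & E\\ 0 & E\end{pmatrix}\] with the $\mathbb{Z}_2$-grading induced by that of $E$. Then $T_{\mathbb{Z}_2}(E)\,T_{\mathbb{Z}_2}(E)\subsetneq T_{\mathbb{Z}_2}(R)$.
   Context: $E$ is the unitary algebra generated by $e_1,e_2,\dots$ subject to $e_ie_j=-e_je_i$; it has basis $1$ and $e_{i_1}\cdots e_{i_s}$ ($i_1<\cdots<i_s$). The grading $\deg(\cdot)_{k^*}$ gives $e_i$ degree $1\in\mathbb{Z}_2$ for $i=1,\dots,k$ and degree $0$ otherwise, and $e_{i_1}\cdots e_{i_s}$ degree $\deg(e_{i_1})+\cdots+\deg(e_{i_s})$. $R$ is graded by letting its degree-$g$ component consist of the matrices all of whose entries have degree $g$. For a $\mathbb{Z}_2$-graded algebra, $T_{\mathbb{Z}_2}(\cdot)$ is its ideal of graded polynomial identities in the free algebra on countably many degree-$0$ and degree-$1$ variables; the product of ideals is the usual one. *)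

theory Defs
  imports "HOL-Library.Poly_Mapping" "HOL-Library.Product_Plus"
begin

text \<open>The key A (a finite set of naturals) stands for the basis monomial e_{a1}...e_{as},
  a1<...<as. Generator index i (0-based) corresponds to e_{i+1} of the paper.\<close>

type_synonym 'a grass = "nat set \<Rightarrow>\<^sub>0 'a"

definition grass_sign :: "nat set \<Rightarrow> nat set \<Rightarrow> 'a::comm_ring_1" where
  "grass_sign A B = (if finite A \<and> finite B \<and> A \<inter> B = {}
     then (-1) ^ card {(a,b). a \<in> A \<and> b \<in> B \<and> b < a} else 0)"

definition grass_mult :: "'a::comm_ring_1 grass \<Rightarrow> 'a grass \<Rightarrow> 'a grass" where
  "grass_mult x y = (\<Sum>A\<in>Poly_Mapping.keys x. \<Sum>B\<in>Poly_Mapping.keys y.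
      Poly_Mapping.single (A \<union> B) (grass_sign A B * Poly_Mapping.lookup x A * Poly_Mapping.lookup y B))"

definition grass_one :: "'a::comm_ring_1 grass" where
  "grass_one = Poly_Mapping.single {} 1"

definition grass_smult :: "'a::comm_ring_1 \<Rightarrow> 'a grass \<Rightarrow> 'a grass" where
  "grass_smult c x = grass_mult (Poly_Mapping.single {} c) x"

text \<open>Grading deg_{k*}: generator e_{i+1} (key i) is odd iff i < k, i.e. e_1..e_k odd.
  An element is homogeneous of degree g (True = 1, False = 0) if it is an element of E
  (all Poly_Mapping.keys finite) and each basis monomial occurring in it has degree g.\<close>

definition grass_hom :: "nat \<Rightarrow> bool \<Rightarrow> 'a::comm_ring_1 grass \<Rightarrow> bool" where
  "grass_hom k g x = (\<forall>A\<in>Poly_Mapping.keys x. finite A \<and> (odd (card (A \<inter> {..<k})) = g))"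

text \<open>(a,b,c) represents the matrix [[a,b],[0,c]].\<close>

type_synonym 'a utm = "'a grass \<times> 'a grass \<times> 'a grass"

definition utm_zero :: "'a::comm_ring_1 utm" where
  "utm_zero = 0"

definition utm_add :: "'a::comm_ring_1 utm \<Rightarrow> 'a utm \<Rightarrow> 'a utm" where
  "utm_add X Y = X + Y"

definition utm_mult :: "'a::comm_ring_1 utm \<Rightarrow> 'a utm \<Rightarrow> 'a utm" where
  "utm_mult X Y = (case X of (a,b,c) \<Rightarrow> case Y of (a',b',c') \<Rightarrow>
     (grass_mult a a', grass_mult a b' + grass_mult b c', grass_mult c c'))"

definition utm_one :: "'a::comm_ring_1 utm" where
  "utm_one = (grass_one, 0, grass_one)"

definition utm_smult :: "'a::comm_ring_1 \<Rightarrow> 'a utm \<Rightarrow> 'a utm" where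
  "utm_smult c X = (case X of (a,b,d) \<Rightarrow> (grass_smult c a, grass_smult c b, grass_smult c d))"

definition utm_hom :: "nat \<Rightarrow> bool \<Rightarrow> 'a::comm_ring_1 utm \<Rightarrow> bool" where
  "utm_hom k g X = (case X of (a,b,c) \<Rightarrow> grass_hom k g a \<and> grass_hom k g b \<and> grass_hom k g c)"

text \<open>Variables are pairs (i, g): the i-th variable of Z_2-degree g (True = 1, False = 0).
  Polynomials are finitely supported functions on words (monomials).\<close>

type_synonym gvar = "nat \<times> bool"
type_synonym 'a fpoly = "gvar list \<Rightarrow>\<^sub>0 'a"

definition fpoly_mult :: "'a::comm_ring_1 fpoly \<Rightarrow> 'a fpoly \<Rightarrow> 'a fpoly" where
  "fpoly_mult p q = (\<Sum>u\<in>Poly_Mapping.keys p. \<Sum>v\<in>Poly_Mapping.keys q. Poly_Mapping.single (u @ v) (Poly_Mapping.lookup p u * Poly_Mapping.lookup q v))"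

definition eval_in ::
  "('b \<Rightarrow> 'b \<Rightarrow> 'b) \<Rightarrow> 'b \<Rightarrow> ('a \<Rightarrow> 'b \<Rightarrow> 'b)
    \<Rightarrow> (gvar \<Rightarrow> 'b) \<Rightarrow> 'a::comm_ring_1 fpoly \<Rightarrow> 'b::comm_monoid_add" where
  "eval_in m u sm s p =
     (\<Sum>w\<in>Poly_Mapping.keys p. sm (Poly_Mapping.lookup p w) (foldr (\<lambda>v acc. m (s v) acc) w u))"

definition T_E :: "nat \<Rightarrow> 'a::comm_ring_1 fpoly set" where
  "T_E k = {p. \<forall>s. (\<forall>i g. grass_hom k g (s (i, g))) \<longrightarrow>
     eval_in grass_mult grass_one grass_smult s p = 0}"

definition T_R :: "nat \<Rightarrow> 'a::comm_ring_1 fpoly set" where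
  "T_R k = {p. \<forall>s. (\<forall>i g. utm_hom k g (s (i, g))) \<longrightarrow>
     eval_in utm_mult utm_one utm_smult s p = 0}"

definition ideal_prod :: "'a::comm_ring_1 fpoly set \<Rightarrow> 'a fpoly set \<Rightarrow> 'a fpoly set" where
  "ideal_prod I J = {p. \<exists>(n::nat) f g. (\<forall>i<n. f i \<in> I \<and> g i \<in> J) \<and> p = (\<Sum>i<n. fpoly_mult (f i) (g i))}"

end

theory Submission
  imports Defs
begin

text \<open>
  Evaluating a graded identity of \<open>E\<close> in \<open>R\<close> gives a matrix with zero diagonal, and any
  product of two such upper triangular matrices vanishes; hence \<open>T(E) T(E) \<subseteq> T(R)\<close>.

  For strictness take \<open>z\<^sup>k\<^sup>+\<^sup>1\<close> with \<open>z\<close> an odd variable. Every basis monomial of an odd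
  element of \<open>E\<close> contains one of \<open>e\<^sub>1, \<dots>, e\<^sub>k\<close>, so a product of \<open>k + 1\<close> odd elements of \<open>E\<close>, and
  hence of \<open>R\<close>, vanishes: \<open>z\<^sup>k\<^sup>+\<^sup>1 \<in> T(R)\<close>. On the other hand the odd element
  \<open>x = e\<^sub>1e\<^sub>k\<^sub>+\<^sub>1 + \<dots> + e\<^sub>ke\<^sub>2\<^sub>k\<close> has \<open>x\<^sup>j\<close> supported on monomials of length \<open>2j\<close>, with coefficient
  \<open>\<plusminus>j!\<close> at \<open>e\<^sub>1\<cdots>e\<^sub>je\<^sub>k\<^sub>+\<^sub>1\<cdots>e\<^sub>k\<^sub>+\<^sub>j\<close>. Substituting \<open>z \<mapsto> x\<close> and all other variables by \<open>0\<close>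
  therefore shows that in characteristic zero no identity of \<open>E\<close> has a nonzero coefficient
  at \<open>z\<^sup>j\<close>, \<open>j \<le> k\<close>. Since every factorisation \<open>z\<^sup>k\<^sup>+\<^sup>1 = z\<^sup>a z\<^sup>b\<close> has \<open>a \<le> k\<close> or \<open>b \<le> k\<close>, the
  coefficient of \<open>z\<^sup>k\<^sup>+\<^sup>1\<close> in every element of \<open>T(E) T(E)\<close> is zero.
\<close>

abbreviation lookup where "lookup \<equiv> Poly_Mapping.lookup"
abbreviation keys where "keys \<equiv> Poly_Mapping.keys"

section \<open>Arithmetic of the Grassmann algebra\<close>

lemma lookup_grass_mult_supset:
  fixes x y :: "'a::comm_ring_1 grass"
  assumes "finite S" "keys x \<subseteq> S" "finite T" "keys y \<subseteq> T"
  shows "lookup (grass_mult x y) K =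
    (\<Sum>A\<in>S. \<Sum>B\<in>T. if A \<union> B = K then grass_sign A B * lookup x A * lookup y B else 0)"
proof -
  have "lookup (grass_mult x y) K =
    (\<Sum>A\<in>keys x. \<Sum>B\<in>keys y. if A \<union> B = K then grass_sign A B * lookup x A * lookup y B else 0)"
    unfolding grass_mult_def lookup_sum lookup_single by (simp add: when_def)
  also have "\<dots> =
    (\<Sum>A\<in>keys x. \<Sum>B\<in>T. if A \<union> B = K then grass_sign A B * lookup x A * lookup y B else 0)"
    by (rule sum.cong[OF refl], rule sum.mono_neutral_left) (use assms in \<open>auto simp: in_keys_iff\<close>)
  also have "\<dots> =
    (\<Sum>A\<in>S. \<Sum>B\<in>T. if A \<union> B = K then grass_sign A B * lookup x A * lookup y B else 0)"
    by (rule sum.mono_neutral_left) (use assms in \<open>auto simp: in_keys_iff intro!: sum.neutral\<close>)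
  finally show ?thesis .
qed

lemma lookup_grass_mult:
  fixes x y :: "'a::comm_ring_1 grass"
  shows "lookup (grass_mult x y) K =
    (\<Sum>A\<in>keys x. \<Sum>B\<in>keys y. if A \<union> B = K then grass_sign A B * lookup x A * lookup y B else 0)"
  by (rule lookup_grass_mult_supset) auto

lemma grass_mult_zero_left [simp]: "grass_mult 0 y = 0"
  by (simp add: grass_mult_def)

lemma grass_mult_zero_right [simp]: "grass_mult x 0 = 0"
  by (simp add: grass_mult_def)

lemma grass_mult_add_left:
  fixes x x' y :: "'a::comm_ring_1 grass"
  shows "grass_mult (x + x') y = grass_mult x y + grass_mult x' y"
proof (rule poly_mapping_eqI)
  fix K
  have "keys (x + x') \<subseteq> keys x \<union> keys x'"
    by (rule keys_add)
  then show "lookup (grass_mult (x + x') y) K = lookup (grass_mult x y + grass_mult x' y) K"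
    unfolding lookup_add
    by (subst (1 2 3) lookup_grass_mult_supset[where S = "keys x \<union> keys x'" and T = "keys y"])
       (auto simp: lookup_add algebra_simps sum.distrib[symmetric] intro!: sum.cong)
qed

lemma grass_mult_add_right:
  fixes x y y' :: "'a::comm_ring_1 grass"
  shows "grass_mult x (y + y') = grass_mult x y + grass_mult x y'"
proof (rule poly_mapping_eqI)
  fix K
  have "keys (y + y') \<subseteq> keys y \<union> keys y'"
    by (rule keys_add)
  then show "lookup (grass_mult x (y + y')) K = lookup (grass_mult x y + grass_mult x y') K"
    unfolding lookup_add
    by (subst (1 2 3) lookup_grass_mult_supset[where S = "keys x" and T = "keys y \<union> keys y'"])
       (auto simp: lookup_add algebra_simps sum.distrib[symmetric] intro!: sum.cong)
qed

lemma grass_mult_sum_left: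
  "grass_mult (\<Sum>i\<in>I. f i) (y :: 'a::comm_ring_1 grass) = (\<Sum>i\<in>I. grass_mult (f i) y)"
  by (induction I rule: infinite_finite_induct) (auto simp: grass_mult_add_left)

lemma grass_mult_sum_right:
  "grass_mult (y :: 'a::comm_ring_1 grass) (\<Sum>i\<in>I. f i) = (\<Sum>i\<in>I. grass_mult y (f i))"
  by (induction I rule: infinite_finite_induct) (auto simp: grass_mult_add_right)

lemma poly_mapping_sum_single_lookup: "x = (\<Sum>A\<in>keys x. Poly_Mapping.single A (lookup x A))"
  by (rule poly_mapping_eqI) (auto simp: lookup_sum lookup_single when_def in_keys_iff)

lemma grass_mult_single:
  "grass_mult (Poly_Mapping.single A a) (Poly_Mapping.single B b) =
   Poly_Mapping.single (A \<union> B) (grass_sign A B * a * (b :: 'a::comm_ring_1))"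
  by (simp add: grass_mult_def)

definition inversions :: "nat set \<Rightarrow> nat set \<Rightarrow> (nat \<times> nat) set" where
  "inversions A B = {(a, b). a \<in> A \<and> b \<in> B \<and> b < a}"

lemma finite_inversions: "finite A \<Longrightarrow> finite B \<Longrightarrow> finite (inversions A B)"
  by (rule finite_subset[of _ "A \<times> B"]) (auto simp: inversions_def)

lemma inversions_Un_left: "inversions (A \<union> B) C = inversions A C \<union> inversions B C"
  by (auto simp: inversions_def)

lemma inversions_Un_right: "inversions A (B \<union> C) = inversions A B \<union> inversions A C"
  by (auto simp: inversions_def)

lemma grass_sign_eq:
  "grass_sign A B =
     (if finite A \<and> finite B \<and> A \<inter> B = {} then (-1) ^ card (inversions A B) else 0)"
  by (simp add: grass_sign_def inversions_def)

lemma grass_sign_nonzero_imp: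
  "grass_sign A B \<noteq> (0::'a::comm_ring_1) \<Longrightarrow> finite A \<and> finite B \<and> A \<inter> B = {}"
  by (auto simp: grass_sign_def split: if_splits)

lemma grass_sign_overlap: "A \<inter> B \<noteq> {} \<Longrightarrow> grass_sign A B = 0"
  by (simp add: grass_sign_def)

lemma grass_sign_empty_left: "grass_sign {} B = (if finite B then 1 else 0)"
  by (simp add: grass_sign_def)

lemma grass_sign_empty_right: "grass_sign A {} = (if finite A then 1 else 0)"
  by (simp add: grass_sign_def)

lemma grass_sign_cocycle:
  "grass_sign A B * grass_sign (A \<union> B) C = (grass_sign B C * grass_sign A (B \<union> C) :: 'a::comm_ring_1)"
proof (cases "finite A \<and> finite B \<and> finite C \<and> A \<inter> B = {} \<and> A \<inter> C = {} \<and> B \<inter> C = {}")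
  case True
  have "card (inversions (A \<union> B) C) = card (inversions A C) + card (inversions B C)"
    unfolding inversions_Un_left
    by (rule card_Un_disjoint[OF finite_inversions finite_inversions]) (use True in \<open>auto simp: inversions_def\<close>)
  moreover have "card (inversions A (B \<union> C)) = card (inversions A B) + card (inversions A C)"
    unfolding inversions_Un_right
    by (rule card_Un_disjoint[OF finite_inversions finite_inversions]) (use True in \<open>auto simp: inversions_def\<close>)
  moreover have "(A \<union> B) \<inter> C = {}" "A \<inter> (B \<union> C) = {}"
    using True by auto
  ultimately show ?thesis
    using True by (simp add: grass_sign_eq power_add mult_ac)
qed (auto simp: grass_sign_eq)

lemma grass_mult_assoc:
  fixes x y z :: "'a::comm_ring_1 grass"
  shows "grass_mult (grass_mult x y) z = grass_mult x (grass_mult y z)"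
proof -
  have single_assoc:
    "grass_mult (grass_mult (Poly_Mapping.single A a) (Poly_Mapping.single B b)) (Poly_Mapping.single C c)
   = grass_mult (Poly_Mapping.single A a) (grass_mult (Poly_Mapping.single B b) (Poly_Mapping.single C c))"
    for A B C and a b c :: 'a
  proof -
    have "grass_sign A B * grass_sign (A \<union> B) C * a * b * c = grass_sign B C * grass_sign A (B \<union> C) * a * b * c"
      by (simp only: grass_sign_cocycle)
    then show ?thesis
      by (simp add: grass_mult_single Un_assoc algebra_simps)
  qed
  show ?thesis
    by (subst (1 2) poly_mapping_sum_single_lookup[of x], subst (1 2) poly_mapping_sum_single_lookup[of y],
        subst (1 2) poly_mapping_sum_single_lookup[of z])
       (simp add: grass_mult_sum_left grass_mult_sum_right single_assoc)
qed

lemma lookup_grass_mult_single_left: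
  fixes y :: "'a::comm_ring_1 grass"
  shows "lookup (grass_mult (Poly_Mapping.single A a) y) K =
    (if A \<subseteq> K then grass_sign A (K - A) * a * lookup y (K - A) else 0)"
proof -
  have term_eq: "(if A \<union> B = K then grass_sign A B * a * lookup y B else 0) =
    (if B = K - A then (if A \<subseteq> K then grass_sign A (K - A) * a * lookup y (K - A) else 0) else 0)"
    for B
    by (cases "A \<inter> B = {}") (auto simp: grass_sign_overlap)
  have "lookup (grass_mult (Poly_Mapping.single A a) y) K =
     (\<Sum>A'\<in>{A}. \<Sum>B\<in>keys y \<union> {K - A}. if A' \<union> B = K
        then grass_sign A' B * lookup (Poly_Mapping.single A a) A' * lookup y B else 0)"
    by (rule lookup_grass_mult_supset) auto
  also have "\<dots> = (\<Sum>B\<in>keys y \<union> {K - A}. if A \<union> B = K then grass_sign A B * a * lookup y B else 0)"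
    by (simp cong: if_cong)
  also have "\<dots> = (if A \<subseteq> K then grass_sign A (K - A) * a * lookup y (K - A) else 0)"
    unfolding term_eq by (rule trans[OF sum.delta]) auto
  finally show ?thesis .
qed

lemma lookup_grass_mult_single_right:
  fixes x :: "'a::comm_ring_1 grass"
  shows "lookup (grass_mult x (Poly_Mapping.single B b)) K =
    (if B \<subseteq> K then grass_sign (K - B) B * lookup x (K - B) * b else 0)"
proof -
  have term_eq: "(if A \<union> B = K then grass_sign A B * lookup x A * b else 0) =
    (if A = K - B then (if B \<subseteq> K then grass_sign (K - B) B * lookup x (K - B) * b else 0) else 0)"
    for A
    by (cases "A \<inter> B = {}") (auto simp: grass_sign_overlap)
  have "lookup (grass_mult x (Poly_Mapping.single B b)) K =
     (\<Sum>A\<in>keys x \<union> {K - B}. \<Sum>B'\<in>{B}. if A \<union> B' = K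
        then grass_sign A B' * lookup x A * lookup (Poly_Mapping.single B b) B' else 0)"
    by (rule lookup_grass_mult_supset) auto
  also have "\<dots> = (\<Sum>A\<in>keys x \<union> {K - B}. if A \<union> B = K then grass_sign A B * lookup x A * b else 0)"
    by (simp cong: if_cong)
  also have "\<dots> = (if B \<subseteq> K then grass_sign (K - B) B * lookup x (K - B) * b else 0)"
    unfolding term_eq by (rule trans[OF sum.delta]) auto
  finally show ?thesis .
qed

lemma lookup_grass_smult:
  "lookup (grass_smult c (x :: 'a::comm_ring_1 grass)) K = (if finite K then c * lookup x K else 0)"
  by (simp add: grass_smult_def lookup_grass_mult_single_left grass_sign_empty_left)

lemma keys_grass_mult:
  fixes x y :: "'a::comm_ring_1 grass"
  assumes "K \<in> keys (grass_mult x y)"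
  obtains A B where "A \<in> keys x" "B \<in> keys y" "K = A \<union> B" "A \<inter> B = {}" "finite A" "finite B"
proof -
  from assms have "(\<Sum>A\<in>keys x. \<Sum>B\<in>keys y.
      if A \<union> B = K then grass_sign A B * lookup x A * lookup y B else 0) \<noteq> 0"
    by (simp add: in_keys_iff lookup_grass_mult)
  then obtain A where A: "A \<in> keys x" and
    sum_B: "(\<Sum>B\<in>keys y. if A \<union> B = K then grass_sign A B * lookup x A * lookup y B else 0) \<noteq> 0"
    by (rule sum.not_neutral_contains_not_neutral)
  obtain B where B: "B \<in> keys y"
    and nonzero: "(if A \<union> B = K then grass_sign A B * lookup x A * lookup y B else 0) \<noteq> 0"
    using sum_B by (rule sum.not_neutral_contains_not_neutral)
  from nonzero have "A \<union> B = K" and "grass_sign A B \<noteq> (0::'a)"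
    by (auto split: if_splits)
  with A B grass_sign_nonzero_imp[of A B] that show ?thesis
    by blast
qed

text \<open>
  The type \<open>'a grass\<close> also contains functions supported on infinite index sets; the
  elements of \<open>E\<close> proper are those with finite keys, and only they are fixed by \<open>grass_one\<close>.
\<close>

definition grass_elem :: "'a::comm_ring_1 grass \<Rightarrow> bool" where
  "grass_elem x \<longleftrightarrow> (\<forall>A\<in>keys x. finite A)"

lemma grass_elem_mult [simp]: "grass_elem (grass_mult x y)"
  unfolding grass_elem_def by (auto elim: keys_grass_mult)

lemma grass_elem_add [simp]: "grass_elem x \<Longrightarrow> grass_elem y \<Longrightarrow> grass_elem (x + y)"
  using keys_add[of x y] unfolding grass_elem_def by blast

lemma grass_elem_zero [simp]: "grass_elem 0"
  by (simp add: grass_elem_def)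

lemma grass_elem_one [simp]: "grass_elem grass_one"
  by (simp add: grass_one_def grass_elem_def)

lemma grass_mult_one_left: "grass_elem x \<Longrightarrow> grass_mult grass_one x = x"
  by (rule poly_mapping_eqI)
     (auto simp: grass_one_def grass_elem_def lookup_grass_mult_single_left grass_sign_empty_left in_keys_iff)

lemma grass_mult_scalar_commute:
  "grass_mult x (Poly_Mapping.single {} c) = grass_mult (Poly_Mapping.single {} c) (x :: 'a::comm_ring_1 grass)"
  by (rule poly_mapping_eqI)
     (simp add: lookup_grass_mult_single_right lookup_grass_mult_single_left grass_sign_empty_right
       grass_sign_empty_left mult.commute)

lemma grass_mult_smult_left:
  "grass_mult (grass_smult c x) y = grass_smult c (grass_mult x (y :: 'a::comm_ring_1 grass))"
  unfolding grass_smult_def by (rule grass_mult_assoc)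

lemma grass_mult_smult_right:
  "grass_mult x (grass_smult c y) = grass_smult c (grass_mult x (y :: 'a::comm_ring_1 grass))"
  unfolding grass_smult_def
  by (metis grass_mult_assoc grass_mult_scalar_commute)

lemma grass_smult_smult:
  "grass_smult c (grass_smult d x) = grass_smult (c * d) (x :: 'a::comm_ring_1 grass)"
  unfolding grass_smult_def
  by (simp add: grass_mult_assoc[symmetric] grass_mult_single grass_sign_empty_left)

lemma grass_smult_add_scalar:
  "grass_smult (c + d) x = grass_smult c x + grass_smult d (x :: 'a::comm_ring_1 grass)"
  by (simp add: grass_smult_def single_add grass_mult_add_left)

lemma grass_smult_zero_scalar: "grass_smult 0 x = (0 :: 'a::comm_ring_1 grass)"
  by (simp add: grass_smult_def)

lemma grass_smult_add:
  "grass_smult c (x + y) = grass_smult c x + grass_smult c (y :: 'a::comm_ring_1 grass)"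
  by (simp add: grass_smult_def grass_mult_add_right)

lemma grass_smult_mult_smult:
  "grass_mult (grass_smult c x) (grass_smult d y) = grass_smult (c * d) (grass_mult x (y :: 'a::comm_ring_1 grass))"
  by (simp add: grass_mult_smult_left grass_mult_smult_right grass_smult_smult mult.commute)

section \<open>Evaluation of noncommutative polynomials is multiplicative\<close>

text \<open>
  The unit is only required to be a left unit on a subset \<open>P\<close> containing all products and
  the unit itself, so that \<open>grass_elem\<close> can serve as \<open>P\<close>.
\<close>

locale eval_algebra =
  fixes mult :: "'b::ab_group_add \<Rightarrow> 'b \<Rightarrow> 'b" and unit :: 'b
    and smult :: "'a::comm_ring_1 \<Rightarrow> 'b \<Rightarrow> 'b"
    and P :: "'b \<Rightarrow> bool"
  assumes mult_add_left: "mult (x + y) z = mult x z + mult y z"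
    and mult_add_right: "mult x (y + z) = mult x y + mult x z"
    and mult_assoc: "mult (mult x y) z = mult x (mult y z)"
    and mult_unit_left: "P y \<Longrightarrow> mult unit y = y"
    and P_mult: "P (mult x y)" and P_unit: "P unit"
    and smult_add_scalar: "smult (c + d) x = smult c x + smult d x"
    and smult_zero_scalar: "smult 0 x = 0"
    and mult_smult_smult: "mult (smult c x) (smult d y) = smult (c * d) (mult x y)"
begin

lemma mult_zero_left: "mult 0 z = 0"
  using mult_add_left[of 0 0 z] by simp

lemma mult_zero_right: "mult z 0 = 0"
  using mult_add_right[of z 0 0] by simp

lemma mult_sum_left: "mult (\<Sum>i\<in>I. f i) z = (\<Sum>i\<in>I. mult (f i) z)"
  by (induction I rule: infinite_finite_induct) (auto simp: mult_add_left mult_zero_left)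

lemma mult_sum_right: "mult z (\<Sum>i\<in>I. f i) = (\<Sum>i\<in>I. mult z (f i))"
  by (induction I rule: infinite_finite_induct) (auto simp: mult_add_right mult_zero_right)

definition eval_word :: "(gvar \<Rightarrow> 'b) \<Rightarrow> gvar list \<Rightarrow> 'b" where
  "eval_word s w = foldr (\<lambda>v acc. mult (s v) acc) w unit"

lemma eval_word_Nil [simp]: "eval_word s [] = unit"
  by (simp add: eval_word_def)

lemma eval_word_Cons [simp]: "eval_word s (v # w) = mult (s v) (eval_word s w)"
  by (simp add: eval_word_def)

lemma P_eval_word: "P (eval_word s w)"
  by (cases w) (auto simp: P_unit P_mult)

lemma eval_word_append: "eval_word s (w @ w') = mult (eval_word s w) (eval_word s w')"
  by (induction w) (simp_all add: mult_unit_left P_eval_word mult_assoc)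

lemma eval_in_eq_eval_word: "eval_in mult unit smult s p = (\<Sum>w\<in>keys p. smult (lookup p w) (eval_word s w))"
  by (simp add: eval_in_def eval_word_def)

lemma eval_in_supset:
  assumes "finite W" "keys p \<subseteq> W"
  shows "eval_in mult unit smult s p = (\<Sum>w\<in>W. smult (lookup p w) (eval_word s w))"
  unfolding eval_in_eq_eval_word
  by (rule sum.mono_neutral_left) (use assms in \<open>auto simp: in_keys_iff smult_zero_scalar\<close>)

lemma eval_in_add: "eval_in mult unit smult s (p + q) = eval_in mult unit smult s p + eval_in mult unit smult s q"
proof -
  have "keys (p + q) \<subseteq> keys p \<union> keys q"
    by (rule keys_add)
  then show ?thesis
    by (subst (1 2 3) eval_in_supset[where W = "keys p \<union> keys q"])
       (auto simp: lookup_add smult_add_scalar sum.distrib)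
qed

lemma eval_in_zero: "eval_in mult unit smult s 0 = 0"
  by (simp add: eval_in_def)

lemma eval_in_sum: "eval_in mult unit smult s (\<Sum>i\<in>I. p i) = (\<Sum>i\<in>I. eval_in mult unit smult s (p i))"
  by (induction I rule: infinite_finite_induct) (auto simp: eval_in_add eval_in_zero)

lemma eval_in_single: "eval_in mult unit smult s (Poly_Mapping.single w c) = smult c (eval_word s w)"
  by (subst eval_in_supset[where W = "{w}"]) auto

lemma eval_in_fpoly_mult:
  "eval_in mult unit smult s (fpoly_mult p q) = mult (eval_in mult unit smult s p) (eval_in mult unit smult s q)"
proof -
  have "eval_in mult unit smult s (fpoly_mult p q) =
    (\<Sum>u\<in>keys p. \<Sum>v\<in>keys q. smult (lookup p u * lookup q v) (mult (eval_word s u) (eval_word s v)))"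
    unfolding fpoly_mult_def by (simp add: eval_in_sum eval_in_single eval_word_append)
  also have "\<dots> = (\<Sum>u\<in>keys p. \<Sum>v\<in>keys q.
      mult (smult (lookup p u) (eval_word s u)) (smult (lookup q v) (eval_word s v)))"
    by (simp add: mult_smult_smult)
  also have "\<dots> = mult (eval_in mult unit smult s p) (eval_in mult unit smult s q)"
    unfolding eval_in_eq_eval_word by (simp add: mult_sum_left mult_sum_right, rule sum.swap)
  finally show ?thesis .
qed

end

interpretation grass: eval_algebra grass_mult grass_one grass_smult grass_elem
  by unfold_locales
    (simp_all add: grass_mult_add_left grass_mult_add_right grass_mult_assoc grass_mult_one_left
      grass_smult_add_scalar grass_smult_zero_scalar grass_smult_mult_smult)

section \<open>Upper triangular matrices over \<open>E\<close>\<close>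

definition utm_elem :: "'a::comm_ring_1 utm \<Rightarrow> bool" where
  "utm_elem X \<longleftrightarrow> grass_elem (fst X) \<and> grass_elem (fst (snd X)) \<and> grass_elem (snd (snd X))"

lemma utm_mult_simp [simp]:
  "utm_mult (a, b, c) (a', b', c') = (grass_mult a a', grass_mult a b' + grass_mult b c', grass_mult c c')"
  by (simp add: utm_mult_def)

lemma utm_smult_simp [simp]: "utm_smult r (a, b, c) = (grass_smult r a, grass_smult r b, grass_smult r c)"
  by (simp add: utm_smult_def)

interpretation utm: eval_algebra utm_mult utm_one utm_smult utm_elem
proof unfold_locales
  fix x y z :: "'a::comm_ring_1 utm" and c d :: 'a
  show "utm_mult (x + y) z = utm_mult x z + utm_mult y z"
    by (cases x; cases y; cases z) (simp add: grass_mult_add_left)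
  show "utm_mult x (y + z) = utm_mult x y + utm_mult x z"
    by (cases x; cases y; cases z) (simp add: grass_mult_add_right)
  show "utm_mult (utm_mult x y) z = utm_mult x (utm_mult y z)"
    by (cases x; cases y; cases z) (simp add: grass_mult_add_right grass_mult_add_left grass_mult_assoc)
  show "utm_elem y \<Longrightarrow> utm_mult utm_one y = y"
    by (cases y) (simp add: utm_elem_def utm_one_def grass_mult_one_left)
  show "utm_elem (utm_mult x y)"
    by (cases x; cases y) (simp add: utm_elem_def)
  show "utm_elem (utm_one :: 'a utm)"
    by (simp add: utm_elem_def utm_one_def)
  show "utm_smult (c + d) x = utm_smult c x + utm_smult d x"
    by (cases x) (simp add: grass_smult_add_scalar)
  show "utm_smult 0 x = 0"
    by (cases x) (simp add: zero_prod_def grass_smult_zero_scalar)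
  show "utm_mult (utm_smult c x) (utm_smult d y) = utm_smult (c * d) (utm_mult x y)"
    by (cases x; cases y) (simp only: utm_mult_simp utm_smult_simp grass_smult_mult_smult grass_smult_add)
qed

lemma fst_utm_mult: "fst (utm_mult X Y) = grass_mult (fst X) (fst Y)"
  by (cases X; cases Y) simp

lemma snd_snd_utm_mult: "snd (snd (utm_mult X Y)) = grass_mult (snd (snd X)) (snd (snd Y))"
  by (cases X; cases Y) simp

lemma fst_utm_smult: "fst (utm_smult c X) = grass_smult c (fst X)"
  by (cases X) simp

lemma snd_snd_utm_smult: "snd (snd (utm_smult c X)) = grass_smult c (snd (snd X))"
  by (cases X) simp

lemma fst_eval_in_utm:
  "fst (eval_in utm_mult utm_one utm_smult s (p :: 'a::comm_ring_1 fpoly)) =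
   eval_in grass_mult grass_one grass_smult (\<lambda>v. fst (s v)) p"
proof -
  have "fst (utm.eval_word s w) = grass.eval_word (\<lambda>v. fst (s v)) w" for w
    by (induction w) (simp_all add: fst_utm_mult, simp add: utm_one_def)
  then show ?thesis
    unfolding utm.eval_in_eq_eval_word grass.eval_in_eq_eval_word fst_sum fst_utm_smult by simp
qed

lemma snd_snd_eval_in_utm:
  "snd (snd (eval_in utm_mult utm_one utm_smult s (p :: 'a::comm_ring_1 fpoly))) =
   eval_in grass_mult grass_one grass_smult (\<lambda>v. snd (snd (s v))) p"
proof -
  have "snd (snd (utm.eval_word s w)) = grass.eval_word (\<lambda>v. snd (snd (s v))) w" for w
    by (induction w) (simp_all add: snd_snd_utm_mult, simp add: utm_one_def)
  then show ?thesis
    unfolding utm.eval_in_eq_eval_word grass.eval_in_eq_eval_word snd_sum snd_snd_utm_smult by simp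
qed

lemma eval_in_utm_diagonal_zero:
  assumes "f \<in> T_E k" and "\<forall>i g. utm_hom k g (s (i, g))"
  obtains b where "eval_in utm_mult utm_one utm_smult s (f :: 'a::comm_ring_1 fpoly) = (0, b, 0)"
proof -
  have diagonal_hom: "grass_hom k g (fst X) \<and> grass_hom k g (snd (snd X))" if "utm_hom k g X" for g X
    using that by (cases X) (simp add: utm_hom_def)
  have "\<forall>i g. grass_hom k g (fst (s (i, g)))" and "\<forall>i g. grass_hom k g (snd (snd (s (i, g))))"
    using assms(2) diagonal_hom by blast+
  with assms(1) have "fst (eval_in utm_mult utm_one utm_smult s f) = 0"
    and "snd (snd (eval_in utm_mult utm_one utm_smult s f)) = 0"
    unfolding fst_eval_in_utm snd_snd_eval_in_utm T_E_def by auto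
  then show ?thesis
    using that by (metis prod.collapse)
qed

lemma ideal_prod_T_E_subset_T_R: "ideal_prod (T_E k) (T_E k) \<subseteq> (T_R k :: 'a::comm_ring_1 fpoly set)"
proof
  fix p :: "'a fpoly"
  assume "p \<in> ideal_prod (T_E k) (T_E k)"
  then obtain n :: nat and f g where fg: "\<forall>i<n. f i \<in> T_E k \<and> g i \<in> T_E k"
    and p: "p = (\<Sum>i<n. fpoly_mult (f i) (g i))"
    by (auto simp: ideal_prod_def)
  show "p \<in> T_R k"
    unfolding T_R_def
  proof (intro CollectI allI impI)
    fix s :: "gvar \<Rightarrow> 'a utm"
    assume s: "\<forall>i g. utm_hom k g (s (i, g))"
    have "eval_in utm_mult utm_one utm_smult s (fpoly_mult (f i) (g i)) = 0" if "i < n" for i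
    proof -
      obtain b where "eval_in utm_mult utm_one utm_smult s (f i) = (0, b, 0)"
        using eval_in_utm_diagonal_zero fg s \<open>i < n\<close> by blast
      moreover obtain b' where "eval_in utm_mult utm_one utm_smult s (g i) = (0, b', 0)"
        using eval_in_utm_diagonal_zero fg s \<open>i < n\<close> by blast
      ultimately show ?thesis
        by (simp add: utm.eval_in_fpoly_mult zero_prod_def)
    qed
    then show "eval_in utm_mult utm_one utm_smult s p = 0"
      unfolding p utm.eval_in_sum by simp
  qed
qed

section \<open>A power of an odd variable vanishing on \<open>R\<close>\<close>

definition odd_var :: gvar where
  "odd_var = (0, True)"

definition odd_weight_ge :: "nat \<Rightarrow> nat \<Rightarrow> 'a::comm_ring_1 grass \<Rightarrow> bool" where
  "odd_weight_ge k n x \<longleftrightarrow> (\<forall>K\<in>keys x. n \<le> card (K \<inter> {..<k}))"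

lemma odd_weight_ge_add: "odd_weight_ge k n x \<Longrightarrow> odd_weight_ge k n y \<Longrightarrow> odd_weight_ge k n (x + y)"
  using keys_add[of x y] unfolding odd_weight_ge_def by blast

lemma odd_weight_ge_mult:
  assumes "odd_weight_ge k a x" "odd_weight_ge k b y"
  shows "odd_weight_ge k (a + b) (grass_mult x y)"
  unfolding odd_weight_ge_def
proof
  fix K
  assume "K \<in> keys (grass_mult x y)"
  then obtain A B where A: "A \<in> keys x" and B: "B \<in> keys y" and K: "K = A \<union> B"
    and disj: "A \<inter> B = {}" and fin: "finite A" "finite B"
    by (rule keys_grass_mult)
  have "card (K \<inter> {..<k}) = card (A \<inter> {..<k}) + card (B \<inter> {..<k})"
    unfolding K Int_Un_distrib2 by (rule card_Un_disjoint) (use fin disj in auto)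
  moreover have "a \<le> card (A \<inter> {..<k})" "b \<le> card (B \<inter> {..<k})"
    using assms A B unfolding odd_weight_ge_def by auto
  ultimately show "a + b \<le> card (K \<inter> {..<k})"
    by simp
qed

lemma odd_weight_ge_1_if_odd: "grass_hom k True x \<Longrightarrow> odd_weight_ge k 1 x"
  unfolding grass_hom_def odd_weight_ge_def by (auto simp: Suc_le_eq intro: odd_pos)

lemma odd_weight_ge_Suc_eq_zero:
  assumes "odd_weight_ge k (Suc k) x"
  shows "x = 0"
proof -
  have "card (K \<inter> {..<k}) \<le> k" for K
    using card_mono[of "{..<k}" "K \<inter> {..<k}"] by auto
  with assms have "keys x = {}"
    unfolding odd_weight_ge_def by (metis all_not_in_conv not_less_eq_eq)
  then show ?thesis
    by simp
qed

lemma odd_power_in_T_R: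
  "Poly_Mapping.single (replicate (Suc k) odd_var) 1 \<in> (T_R k :: 'a::comm_ring_1 fpoly set)"
  unfolding T_R_def
proof (intro CollectI allI impI)
  fix s :: "gvar \<Rightarrow> 'a utm"
  assume "\<forall>i g. utm_hom k g (s (i, g))"
  then have "utm_hom k True (s odd_var)"
    by (simp add: odd_var_def)
  then obtain a b c where abc: "s odd_var = (a, b, c)"
    and odd: "grass_hom k True a" "grass_hom k True b" "grass_hom k True c"
    by (cases "s odd_var") (auto simp: utm_hom_def)
  define w where "w n = utm.eval_word s (replicate n odd_var)" for n
  have mult_odd: "odd_weight_ge k (Suc n) (grass_mult x y)"
    if "grass_hom k True x" "odd_weight_ge k n y" for x y n
    using odd_weight_ge_mult[OF odd_weight_ge_1_if_odd[OF that(1)] that(2)] by simp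
  have "odd_weight_ge k n (fst (w n)) \<and> odd_weight_ge k n (fst (snd (w n)))
        \<and> odd_weight_ge k n (snd (snd (w n)))" for n
  proof (induction n)
    case 0
    show ?case by (simp add: w_def utm_one_def odd_weight_ge_def)
  next
    case (Suc n)
    then show ?case
      by (cases "w n") (simp add: w_def abc odd mult_odd odd_weight_ge_add)
  qed
  then have "w (Suc k) = 0"
    by (metis odd_weight_ge_Suc_eq_zero prod.collapse zero_prod_def)
  then show "eval_in utm_mult utm_one utm_smult s (Poly_Mapping.single (replicate (Suc k) odd_var) 1) = 0"
    by (simp add: w_def utm.eval_in_single zero_prod_def grass_smult_def)
qed

section \<open>Powers of the odd variable are not identities of \<open>E\<close>\<close>

definition grass_pairs :: "nat \<Rightarrow> 'a::comm_ring_1 grass" where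
  "grass_pairs k = (\<Sum>i<k. Poly_Mapping.single {i, k + i} 1)"

definition pairs_subst :: "nat \<Rightarrow> gvar \<Rightarrow> 'a::comm_ring_1 grass" where
  "pairs_subst k v = (if v = odd_var then grass_pairs k else 0)"

definition paired_set :: "nat \<Rightarrow> nat \<Rightarrow> nat set \<Rightarrow> bool" where
  "paired_set k n K \<longleftrightarrow> (\<exists>S\<subseteq>{..<k}. card S = n \<and> K = S \<union> (+) k ` S)"

fun pairs_power_coeff :: "nat \<Rightarrow> 'a::comm_ring_1" where
  "pairs_power_coeff 0 = 1"
| "pairs_power_coeff (Suc n) = of_nat (Suc n) * (-1) ^ n * pairs_power_coeff n"

lemma keys_grass_pairs: "K \<in> keys (grass_pairs k :: 'a::comm_ring_1 grass) \<Longrightarrow> \<exists>i<k. K = {i, k + i}"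
  using keys_sum[of "\<lambda>i. Poly_Mapping.single {i, k + i} (1::'a)" "{..<k}"]
  by (auto simp: grass_pairs_def)

lemma grass_hom_pairs_subst: "grass_hom k g (pairs_subst k (i, g) :: 'a::comm_ring_1 grass)"
proof (cases "(i, g) = odd_var")
  case True
  have "K \<inter> {..<k} = {i'}" if "i' < k" "K = {i', k + i'}" for K i'
    using that by auto
  with True show ?thesis
    by (auto simp: grass_hom_def pairs_subst_def odd_var_def dest!: keys_grass_pairs)
qed (simp add: pairs_subst_def grass_hom_def)

lemma eval_word_pairs_subst_other:
  "v \<in> set w \<Longrightarrow> v \<noteq> odd_var \<Longrightarrow> grass.eval_word (pairs_subst k) w = (0 :: 'a::comm_ring_1 grass)"
  by (induction w) (auto simp: pairs_subst_def)

lemma lookup_grass_pairs_mult: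
  "lookup (grass_mult (grass_pairs k) y) K = (\<Sum>i<k. if {i, k + i} \<subseteq> K then
     grass_sign {i, k + i} (K - {i, k + i}) * lookup (y :: 'a::comm_ring_1 grass) (K - {i, k + i}) else 0)"
  by (simp add: grass_pairs_def grass_mult_sum_left lookup_sum lookup_grass_mult_single_left cong: if_cong)

lemma paired_set_0: "paired_set k 0 K \<longleftrightarrow> K = {}"
  by (auto simp: paired_set_def card_eq_0_iff dest: finite_subset[OF _ finite_lessThan])

lemma paired_set_lower:
  assumes "paired_set k n K"
  shows "card (K \<inter> {..<k}) = n" and "i < k \<Longrightarrow> i \<in> K \<Longrightarrow> k + i \<in> K"
proof -
  obtain S where S: "S \<subseteq> {..<k}" "card S = n" and K: "K = S \<union> (+) k ` S"
    using assms by (auto simp: paired_set_def)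
  then have "K \<inter> {..<k} = S"
    by auto
  then show "card (K \<inter> {..<k}) = n" and "i < k \<Longrightarrow> i \<in> K \<Longrightarrow> k + i \<in> K"
    using S K by auto
qed

lemma paired_set_Suc_iff:
  assumes "i < k" "{i, k + i} \<subseteq> K"
  shows "paired_set k (Suc n) K \<longleftrightarrow> paired_set k n (K - {i, k + i})"
proof
  assume "paired_set k (Suc n) K"
  then obtain S where S: "S \<subseteq> {..<k}" "card S = Suc n" and K: "K = S \<union> (+) k ` S"
    by (auto simp: paired_set_def)
  with assms have "i \<in> S" and "K - {i, k + i} = (S - {i}) \<union> (+) k ` (S - {i})"
    by auto
  with S show "paired_set k n (K - {i, k + i})"
    unfolding paired_set_def by (intro exI[of _ "S - {i}"]) auto
next
  assume "paired_set k n (K - {i, k + i})"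
  then obtain S where S: "S \<subseteq> {..<k}" "card S = n" and K: "K - {i, k + i} = S \<union> (+) k ` S"
    by (auto simp: paired_set_def)
  with assms have "i \<notin> S" and "finite S" and "K = insert i S \<union> (+) k ` insert i S"
    by (auto intro: finite_subset)
  with S assms show "paired_set k (Suc n) K"
    unfolding paired_set_def by (intro exI[of _ "insert i S"]) auto
qed

lemma grass_sign_pair_paired_set:
  assumes "i < k" "paired_set k n B" "i \<notin> B"
  shows "grass_sign {i, k + i} B = ((-1) ^ n :: 'a::comm_ring_1)"
proof -
  obtain S where S: "S \<subseteq> {..<k}" "card S = n" and B: "B = S \<union> (+) k ` S"
    using assms(2) by (auto simp: paired_set_def)
  have "finite S" "finite B"
    using S B by (auto intro: finite_subset)
  have "inversions {i, k + i} B = Pair i ` {b\<in>B. b < i} \<union> Pair (k + i) ` {b\<in>B. b < k + i}"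
    by (auto simp: inversions_def)
  also have "card \<dots> = card {b\<in>B. b < i} + card {b\<in>B. b < k + i}"
    by (subst card_Un_disjoint) (use \<open>finite B\<close> assms(1) in \<open>auto simp: card_image inj_on_def\<close>)
  moreover have "{b\<in>B. b < i} = {t\<in>S. t < i}"
    using assms(1) by (auto simp: B)
  moreover have "{b\<in>B. b < k + i} = S \<union> (+) k ` {t\<in>S. t < i}"
    using S by (auto simp: B)
  moreover have "card (S \<union> (+) k ` {t\<in>S. t < i}) = card S + card {t\<in>S. t < i}"
    by (subst card_Un_disjoint) (use \<open>finite S\<close> S in \<open>auto simp: card_image\<close>)
  ultimately have "card (inversions {i, k + i} B) = card S + 2 * card {t\<in>S. t < i}"
    by simp
  moreover have "{i, k + i} \<inter> B = {}"
    using assms(1,3) S by (auto simp: B)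
  ultimately show ?thesis
    using \<open>finite B\<close> S by (simp add: grass_sign_eq power_add power_mult)
qed

text \<open>
  The pairs \<open>e\<^sub>ie\<^sub>k\<^sub>+\<^sub>i\<close> are even, so they commute and square to zero; hence the \<open>n\<close>-th power of
  \<open>grass_pairs k\<close> is \<open>n!\<close> times the sum of all products of \<open>n\<close> distinct pairs, and reordering
  such a product into a basis monomial costs a sign depending only on \<open>n\<close>.
\<close>

lemma lookup_grass_pairs_power:
  "lookup (grass.eval_word (pairs_subst k) (replicate n odd_var) :: 'a::comm_ring_1 grass) K =
   (if paired_set k n K then pairs_power_coeff n else 0)"
proof (induction n arbitrary: K)
  case 0
  then show ?case
    by (simp add: paired_set_0, simp add: grass_one_def lookup_single)
next
  case (Suc n)
  have term_eq:
    "(if {i, k + i} \<subseteq> K then grass_sign {i, k + i} (K - {i, k + i}) *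
        lookup (grass.eval_word (pairs_subst k) (replicate n odd_var) :: 'a grass) (K - {i, k + i}) else 0)
     = (if paired_set k (Suc n) K \<and> i \<in> K then (-1) ^ n * pairs_power_coeff n else 0)"
    if "i < k" for i
  proof (cases "{i, k + i} \<subseteq> K")
    case True
    then show ?thesis
      using paired_set_Suc_iff[OF that True, of n] grass_sign_pair_paired_set[OF that, of n "K - {i, k + i}", where 'a = 'a]
      by (auto simp: Suc.IH)
  next
    case False
    then show ?thesis
      using paired_set_lower(2)[of k "Suc n" K i] that by auto
  qed
  have "lookup (grass.eval_word (pairs_subst k) (replicate (Suc n) odd_var) :: 'a grass) K =
    (\<Sum>i<k. if {i, k + i} \<subseteq> K then grass_sign {i, k + i} (K - {i, k + i}) *
        lookup (grass.eval_word (pairs_subst k) (replicate n odd_var) :: 'a grass) (K - {i, k + i}) else 0)"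
    by (simp add: pairs_subst_def lookup_grass_pairs_mult)
  also have "\<dots> = (\<Sum>i<k. if paired_set k (Suc n) K \<and> i \<in> K then (-1) ^ n * pairs_power_coeff n else 0)"
    by (rule sum.cong[OF refl], rule term_eq) simp
  also have "\<dots> = (if paired_set k (Suc n) K
      then of_nat (card (K \<inter> {..<k})) * ((-1) ^ n * pairs_power_coeff n) else 0)"
    by (cases "paired_set k (Suc n) K") (simp_all add: sum.inter_restrict[symmetric] Int_commute)
  also have "\<dots> = (if paired_set k (Suc n) K then pairs_power_coeff (Suc n) else 0)"
    by (simp add: paired_set_lower(1) mult.assoc)
  finally show ?case .
qed

lemma pairs_power_coeff_nonzero: "pairs_power_coeff n \<noteq> (0::'a::field_char_0)"
  by (induction n) (auto simp del: of_nat_Suc)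

lemma lookup_eval_word_pairs_subst:
  assumes "j \<le> k"
  shows "lookup (grass.eval_word (pairs_subst k) w :: 'a::comm_ring_1 grass) ({..<j} \<union> (+) k ` {..<j})
    = (if w = replicate j odd_var then pairs_power_coeff j else 0)"
proof (cases "\<exists>v\<in>set w. v \<noteq> odd_var")
  case True
  then show ?thesis
    by (auto simp: eval_word_pairs_subst_other)
next
  case False
  then have w: "w = replicate (length w) odd_var"
    by (simp add: replicate_length_same)
  have "paired_set k n ({..<j} \<union> (+) k ` {..<j}) \<longleftrightarrow> n = j" for n
  proof
    assume "paired_set k n ({..<j} \<union> (+) k ` {..<j})"
    moreover have "({..<j} \<union> (+) k ` {..<j}) \<inter> {..<k} = {..<j}"
      using assms by auto
    ultimately show "n = j"
      using paired_set_lower(1) by fastforce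
  qed (use assms in \<open>auto simp: paired_set_def intro!: exI[of _ "{..<j}"]\<close>)
  then show ?thesis
    by (subst (1 2) w, subst lookup_grass_pairs_power) (metis length_replicate)
qed

lemma T_E_coeff_odd_power:
  assumes "f \<in> T_E k" "j \<le> k"
  shows "lookup f (replicate j odd_var) = (0::'a::field_char_0)"
proof -
  let ?K = "{..<j} \<union> (+) k ` {..<j}"
  have "eval_in grass_mult grass_one grass_smult (pairs_subst k) f = (0 :: 'a grass)"
    using assms(1) grass_hom_pairs_subst unfolding T_E_def by blast
  then have "0 = lookup (eval_in grass_mult grass_one grass_smult (pairs_subst k) f :: 'a grass) ?K"
    by simp
  also have "\<dots> = (\<Sum>w\<in>keys f. lookup f w * (if w = replicate j odd_var then pairs_power_coeff j else 0))"
    by (simp add: grass.eval_in_eq_eval_word lookup_sum lookup_grass_smult lookup_eval_word_pairs_subst[OF assms(2)])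
  also have "\<dots> = (\<Sum>w\<in>keys f.
      if w = replicate j odd_var then lookup f (replicate j odd_var) * pairs_power_coeff j else 0)"
    by (rule sum.cong) auto
  also have "\<dots> = lookup f (replicate j odd_var) * pairs_power_coeff j"
    by (simp add: in_keys_iff)
  finally show ?thesis
    by (simp add: pairs_power_coeff_nonzero)
qed

lemma lookup_fpoly_mult:
  "lookup (fpoly_mult f g) w = (\<Sum>u\<in>keys f. \<Sum>v\<in>keys g. if u @ v = w then lookup f u * lookup g v else 0)"
  unfolding fpoly_mult_def by (simp add: lookup_sum lookup_single when_def)

lemma fpoly_mult_T_E_coeff_odd_power:
  assumes "f \<in> T_E k" "g \<in> T_E k"
  shows "lookup (fpoly_mult f g) (replicate (Suc k) odd_var) = (0::'a::field_char_0)"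
  unfolding lookup_fpoly_mult
proof (intro sum.neutral ballI)
  fix u v
  show "(if u @ v = replicate (Suc k) odd_var then lookup f u * lookup g v else 0) = 0"
  proof (cases "u @ v = replicate (Suc k) odd_var")
    case True
    have "\<forall>x\<in>set (u @ v). x = odd_var" and "length (u @ v) = Suc k"
      unfolding True by simp_all
    then have u: "replicate (length u) odd_var = u" and v: "replicate (length v) odd_var = v"
      and "length u \<le> k \<or> length v \<le> k"
      by (auto intro: replicate_length_same)
    then have "lookup f u = 0 \<or> lookup g v = 0"
      using T_E_coeff_odd_power[OF assms(1), of "length u"] T_E_coeff_odd_power[OF assms(2), of "length v"]
      unfolding u v by blast
    then show ?thesis
      by simp
  qed simp
qed

lemma odd_power_not_in_ideal_prod_T_E:
  "Poly_Mapping.single (replicate (Suc k) odd_var) 1 \<notin> ideal_prod (T_E k) (T_E k :: 'a::field_char_0 fpoly set)"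
proof
  assume "Poly_Mapping.single (replicate (Suc k) odd_var) 1 \<in> ideal_prod (T_E k) (T_E k :: 'a fpoly set)"
  then obtain n :: nat and f g :: "nat \<Rightarrow> 'a fpoly" where fg: "\<forall>i<n. f i \<in> T_E k \<and> g i \<in> T_E k"
    and p: "Poly_Mapping.single (replicate (Suc k) odd_var) 1 = (\<Sum>i<n. fpoly_mult (f i) (g i))"
    by (auto simp: ideal_prod_def)
  have "1 = lookup (\<Sum>i<n. fpoly_mult (f i) (g i)) (replicate (Suc k) odd_var)"
    by (simp flip: p)
  also have "\<dots> = 0"
    using fg fpoly_mult_T_E_coeff_odd_power unfolding lookup_sum by (auto intro!: sum.neutral)
  finally show False
    by simp
qed

theorem proposition7p2:
  fixes k :: nat
  assumes "k > 0"
  shows "ideal_prod (T_E k :: 'a::field_char_0 fpoly set) (T_E k) \<subset> T_R k"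
  using ideal_prod_T_E_subset_T_R odd_power_in_T_R odd_power_not_in_ideal_prod_T_E by blast

end
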